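(* For every $1\le q\le\infty$, the pair $(\ell_2^2(\mathbb{R}),\ell_q^2(\mathbb{R}))$ fails the uniform sBPBp.
   Context: $\ell_p^2(\mathbb{R})$ denotes $\mathbb{R}^2$ with the norm $\|(x,y)\|_p=(|x|^p+|y|^p)^{1/p}$ for $p<\infty$ and $\|(x,y)\|_\infty=\max\{|x|,|y|\}$; $S_X$ is the unit sphere of $X$ and $\mathcal{L}(X,Y)$ the bounded linear operators. A pair of Banach spaces $(X,Y)$ has the uniform strong Bishop–Phelps–Bollobás property (uniform sBPBp) if for every $\varepsilon>0$ there exists $\eta(\varepsilon)>0$ such that whenever $T\in\mathcal{L}(X,Y)$ with $\|T\|=1$ and $x_0\in S_X$ satisfy $\|T(x_0)\|>1-\eta(\varepsilon)$, there exists $x_1\in S_X$ with $\|T(x_1)\|=1$ and $\|x_1-x_0\|<\varepsilon$. *)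

theory Defs
  imports "HOL-Analysis.Analysis"
begin

definition lp_norm :: "ereal \<Rightarrow> real \<times> real \<Rightarrow> real" where
  "lp_norm p v = (if p = \<infinity> then max \<bar>fst v\<bar> \<bar>snd v\<bar>
     else (\<bar>fst v\<bar> powr real_of_ereal p + \<bar>snd v\<bar> powr real_of_ereal p) powr (1 / real_of_ereal p))"

definition op_norm :: "ereal \<Rightarrow> ereal \<Rightarrow> (real \<times> real \<Rightarrow> real \<times> real) \<Rightarrow> real" where
  "op_norm p q T = (SUP x\<in>{x. lp_norm p x = 1}. lp_norm q (T x))"

text \<open>Uniform strong Bishop--Phelps--Bollob\'as property for the pair \<open>(\<ell>_p^2, \<ell>_q^2)\<close>.
  All linear maps between finite-dimensional spaces are bounded.\<close>
definition uniform_sBPBp :: "ereal \<Rightarrow> ereal \<Rightarrow> bool" where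
  "uniform_sBPBp p q \<longleftrightarrow>
     (\<forall>\<epsilon>>0. \<exists>\<eta>>0. \<forall>T x0. linear T \<and> op_norm p q T = 1 \<and> lp_norm p x0 = 1
        \<and> lp_norm q (T x0) > 1 - \<eta> \<longrightarrow>
        (\<exists>x1. lp_norm p x1 = 1 \<and> lp_norm q (T x1) = 1 \<and> lp_norm p (x1 - x0) < \<epsilon>))"

end

theory Submission imports Defs begin

text \<open>For \<open>0 < d < 1\<close> let \<open>T\<close> be \<open>diag(1, d)\<close> followed by a linear map
  \<open>J : \<ell>_2^2 \<rightarrow> \<ell>_q^2\<close> of norm at most one mapping both unit vectors to unit vectors (the identity if
  \<open>q \<ge> 2\<close>, a rescaled Hadamard rotation if \<open>q \<le> 2\<close>). Then \<open>\<parallel>T\<parallel> = 1\<close>, but \<open>T\<close> attains its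
  norm only at \<open>\<plusminus>e\<^sub>1\<close>, while \<open>\<parallel>T e\<^sub>2\<parallel> = d\<close> is arbitrarily close to \<open>1\<close> and \<open>e\<^sub>2\<close> is at distance
  \<open>\<surd>2\<close> from \<open>\<plusminus>e\<^sub>1\<close>.\<close>

lemma abs_powr_two: "\<bar>a::real\<bar> powr 2 = a\<^sup>2"
  by (cases "a = 0") (simp_all add: powr_numeral)

lemma abs_powr_eq_power2_powr: "\<bar>a::real\<bar> powr r = (a\<^sup>2) powr (r / 2)"
proof -
  have "(a\<^sup>2) powr (r / 2) = (\<bar>a\<bar> powr 2) powr (r / 2)"
    by (simp only: abs_powr_two)
  also have "\<dots> = \<bar>a\<bar> powr r"
    by (simp only: powr_powr) simp
  finally show ?thesis ..
qed

lemma lp_norm_two_eq_norm: "lp_norm 2 v = norm v"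
  by (cases v) (simp add: lp_norm_def norm_Pair abs_powr_two powr_half_sqrt)

lemma lp_norm_real: "lp_norm (ereal r) v = (\<bar>fst v\<bar> powr r + \<bar>snd v\<bar> powr r) powr (1 / r)"
  by (simp add: lp_norm_def)

lemma lp_norm_scaleR:
  assumes "1 \<le> p"
  shows "lp_norm p (c *\<^sub>R v) = \<bar>c\<bar> * lp_norm p v"
proof (cases p)
  case (real r)
  with assms have "r > 0" by simp
  obtain a b where v: "v = (a, b)" by fastforce
  have "(\<bar>c * a\<bar> powr r + \<bar>c * b\<bar> powr r) powr (1 / r)
      = (\<bar>c\<bar> powr r * (\<bar>a\<bar> powr r + \<bar>b\<bar> powr r)) powr (1 / r)"
    by (simp add: abs_mult powr_mult[of "\<bar>c\<bar>"] distrib_left)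
  also have "\<dots> = \<bar>c\<bar> * (\<bar>a\<bar> powr r + \<bar>b\<bar> powr r) powr (1 / r)"
    using \<open>r > 0\<close> by (simp add: powr_mult powr_powr)
  finally show ?thesis
    by (simp add: real v lp_norm_real)
next
  case PInf
  then show ?thesis
    by (simp add: lp_norm_def abs_mult max_mult_distrib_left)
qed (use assms in simp)

lemma powr_add_le_powr_add:
  fixes A B s :: real
  assumes "0 \<le> A" "0 \<le> B" "1 \<le> s"
  shows "A powr s + B powr s \<le> (A + B) powr s"
proof (cases "A + B = 0")
  case True
  with assms have "A = 0" "B = 0" by auto
  with assms show ?thesis by simp
next
  case False
  define Q where "Q = A + B"
  have "Q > 0" using False assms unfolding Q_def by simp
  have "(A / Q) powr s + (B / Q) powr s \<le> (A / Q) powr 1 + (B / Q) powr 1"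
    using assms \<open>Q > 0\<close> by (intro add_mono powr_mono') (auto simp: Q_def)
  also have "\<dots> = 1"
    using assms \<open>Q > 0\<close> by (simp add: Q_def add_divide_distrib[symmetric])
  finally have "Q powr s * ((A / Q) powr s + (B / Q) powr s) \<le> Q powr s"
    by (simp add: mult_left_le)
  moreover have "Q powr s * ((A / Q) powr s + (B / Q) powr s) = A powr s + B powr s"
    using \<open>Q > 0\<close> assms by (simp add: powr_divide distrib_left)
  ultimately show ?thesis
    by (simp add: Q_def)
qed

lemma powr_add_le_mean_powr:
  fixes A B s :: real
  assumes "0 \<le> A" "0 \<le> B" "0 \<le> s" "s \<le> 1"
  shows "A powr s + B powr s \<le> 2 * ((A + B) / 2) powr s"
proof (cases "A + B = 0")
  case True
  with assms have "A = 0" "B = 0" by auto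
  with assms show ?thesis by simp
next
  case False
  define M where "M = (A + B) / 2"
  have "M > 0" using False assms unfolding M_def by simp
  have young: "t powr s \<le> s * t + (1 - s)" if "0 \<le> t" for t :: real
  proof (cases "t = 0")
    case False
    then show ?thesis
      using Youngs_inequality_0[of s "1 - s" t 1] that assms by simp
  qed (use assms in simp)
  have "(A / M) powr s + (B / M) powr s \<le> s * ((A + B) / M) + 2 * (1 - s)"
    using young[of "A / M"] young[of "B / M"] assms \<open>M > 0\<close>
    by (simp add: add_divide_distrib algebra_simps)
  also have "\<dots> = 2"
    using \<open>M > 0\<close> by (simp add: M_def field_simps)
  finally have "M powr s * ((A / M) powr s + (B / M) powr s) \<le> M powr s * 2"
    by (intro mult_left_mono) auto
  moreover have "M powr s * ((A / M) powr s + (B / M) powr s) = A powr s + B powr s"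
    using \<open>M > 0\<close> assms by (simp add: powr_divide distrib_left)
  ultimately show ?thesis
    by (simp add: M_def mult.commute)
qed

lemma powr_inverse_le_sqrt:
  fixes Q r S :: real
  assumes "0 \<le> Q" "0 < r" "0 \<le> S" "S \<le> Q powr (r / 2)"
  shows "S powr (1 / r) \<le> sqrt Q"
proof -
  have "S powr (1 / r) \<le> (Q powr (r / 2)) powr (1 / r)"
    using assms by (intro powr_mono2) auto
  also have "\<dots> = sqrt Q"
    using assms by (simp add: powr_powr powr_half_sqrt)
  finally show ?thesis .
qed

lemma lp_norm_le_norm_of_ge_two:
  assumes "2 \<le> q"
  shows "lp_norm q v \<le> norm v"
proof (cases q)
  case (real r)
  obtain x y where v: "v = (x, y)" by fastforce
  have "\<bar>x\<bar> powr r + \<bar>y\<bar> powr r \<le> (x\<^sup>2 + y\<^sup>2) powr (r / 2)"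
    unfolding abs_powr_eq_power2_powr using real assms by (intro powr_add_le_powr_add) auto
  then show ?thesis
    using real assms by (simp add: v lp_norm_real norm_Pair powr_inverse_le_sqrt)
next
  case PInf
  then show ?thesis
    by (cases v) (simp add: lp_norm_def norm_Pair real_sqrt_sum_squares_ge1 real_sqrt_sum_squares_ge2)
qed (use assms in simp)

lemma hadamard_lp_contraction:
  assumes "1 \<le> r" "r \<le> 2"
  defines "J \<equiv> \<lambda>v::real \<times> real. (2 powr (- 1 / r)) *\<^sub>R (fst v + snd v, fst v - snd v)"
  shows "lp_norm (ereal r) (J v) \<le> norm v"
    and "lp_norm (ereal r) (J (1, 0)) = 1" and "lp_norm (ereal r) (J (0, 1)) = 1"
proof -
  have unscaled: "lp_norm (ereal r) (a, b) = (\<bar>a\<bar> powr r + \<bar>b\<bar> powr r) powr (1 / r)" for a b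
    by (simp add: lp_norm_real)
  have J: "lp_norm (ereal r) (J v) = 2 powr (- 1 / r) * lp_norm (ereal r) (fst v + snd v, fst v - snd v)" for v
    unfolding J_def by (subst lp_norm_scaleR) (use assms(1) in simp_all)
  obtain x y where v: "v = (x, y)" by fastforce
  have "\<bar>x + y\<bar> powr r + \<bar>x - y\<bar> powr r \<le> 2 * (((x + y)\<^sup>2 + (x - y)\<^sup>2) / 2) powr (r / 2)"
    unfolding abs_powr_eq_power2_powr using assms(1,2) by (intro powr_add_le_mean_powr) auto
  also have "((x + y)\<^sup>2 + (x - y)\<^sup>2) / 2 = x\<^sup>2 + y\<^sup>2"
    by (simp add: power2_eq_square algebra_simps)
  finally have "(\<bar>x + y\<bar> powr r + \<bar>x - y\<bar> powr r) powr (1 / r) \<le> (2 * (x\<^sup>2 + y\<^sup>2) powr (r / 2)) powr (1 / r)"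
    using assms(1) by (intro powr_mono2) auto
  also have "\<dots> = 2 powr (1 / r) * sqrt (x\<^sup>2 + y\<^sup>2)"
    using assms(1) by (simp add: powr_mult powr_powr powr_half_sqrt)
  finally show "lp_norm (ereal r) (J v) \<le> norm v"
    using assms(1) by (simp add: J v unscaled norm_Pair powr_minus_divide divide_simps mult.commute)
  show "lp_norm (ereal r) (J (1, 0)) = 1" "lp_norm (ereal r) (J (0, 1)) = 1"
    using assms(1) by (simp_all add: J unscaled powr_minus_divide powr_powr)
qed

lemma exists_lp_contraction:
  assumes "1 \<le> q"
  obtains J :: "real \<times> real \<Rightarrow> real \<times> real"
  where "linear J" "\<And>v. lp_norm q (J v) \<le> norm v"
    "lp_norm q (J (1, 0)) = 1" "lp_norm q (J (0, 1)) = 1"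
proof (cases "2 \<le> q")
  case True
  show ?thesis
  proof (rule that[of id])
    show "lp_norm q (id v) \<le> norm v" for v
      using True by (simp add: lp_norm_le_norm_of_ge_two)
  qed (use True in \<open>auto simp: lp_norm_def linear_id\<close>)
next
  case False
  with assms obtain r where r: "q = ereal r" "1 \<le> r" "r \<le> 2"
    by (cases q) auto
  define J where "J = (\<lambda>v::real \<times> real. (2 powr (- 1 / r)) *\<^sub>R (fst v + snd v, fst v - snd v))"
  have "linear J"
    unfolding J_def by (intro linearI) (simp_all add: algebra_simps)
  with hadamard_lp_contraction[of r] r show ?thesis
    by (intro that[of J]) (auto simp: J_def)
qed

lemma norm_scale_snd_le:
  fixes d :: real
  assumes "\<bar>d\<bar> \<le> 1"
  shows "norm (fst v, d * snd v) \<le> norm v"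
proof -
  have "(d * snd v)\<^sup>2 \<le> (snd v)\<^sup>2"
    using assms by (simp add: power_mult_distrib mult_left_le_one_le abs_square_le_1 mult_le_cancel_right1)
  then show ?thesis
    by (cases v) (simp add: norm_Pair)
qed

lemma norm_scale_snd_less:
  fixes d :: real
  assumes "\<bar>d\<bar> < 1" "snd v \<noteq> 0"
  shows "norm (fst v, d * snd v) < norm v"
proof -
  have "(d * snd v)\<^sup>2 < (snd v)\<^sup>2"
    using assms by (simp add: power_mult_distrib abs_square_less_1)
  then show ?thesis
    by (cases v) (simp add: norm_Pair)
qed

lemma op_norm_diagonal_contraction:
  fixes T :: "real \<times> real \<Rightarrow> real \<times> real" and d :: real
  assumes "\<bar>d\<bar> < 1" and bound: "\<And>v. lp_norm q (T v) \<le> norm (fst v, d * snd v)"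
    and "lp_norm q (T (1, 0)) = 1"
  shows "op_norm 2 q T = 1"
    and "norm x = 1 \<Longrightarrow> lp_norm q (T x) = 1 \<Longrightarrow> snd x = 0"
proof -
  have "lp_norm q (T v) \<le> 1" if "norm v = 1" for v
    using bound[of v] norm_scale_snd_le[of d v] assms(1) that by linarith
  with assms(3) show "op_norm 2 q T = 1"
    unfolding op_norm_def lp_norm_two_eq_norm by (intro cSup_eq_maximum) auto
  show "snd x = 0" if "norm x = 1" "lp_norm q (T x) = 1"
    using bound[of x] norm_scale_snd_less[of d x] assms(1) that by fastforce
qed

lemma exists_operator_attaining_norm_only_on_first_axis:
  fixes d :: real
  assumes "1 \<le> q" "\<bar>d\<bar> < 1"
  obtains T :: "real \<times> real \<Rightarrow> real \<times> real"
  where "linear T" "op_norm 2 q T = 1" "lp_norm q (T (0, 1)) = \<bar>d\<bar>"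
    "\<And>x. norm x = 1 \<Longrightarrow> lp_norm q (T x) = 1 \<Longrightarrow> snd x = 0"
proof -
  obtain J :: "real \<times> real \<Rightarrow> real \<times> real" where J: "linear J" "\<And>v. lp_norm q (J v) \<le> norm v"
    "lp_norm q (J (1, 0)) = 1" "lp_norm q (J (0, 1)) = 1"
    using exists_lp_contraction[OF assms(1)] by blast
  define T where "T = J \<circ> (\<lambda>v. (fst v, d * snd v))"
  have "linear (\<lambda>v::real \<times> real. (fst v, d * snd v))"
    by (intro linearI) (simp_all add: algebra_simps)
  then have "linear T"
    unfolding T_def using J(1) by (rule linear_compose)
  have bound: "lp_norm q (T v) \<le> norm (fst v, d * snd v)" for v
    unfolding T_def comp_def by (rule J(2))
  have "T (1, 0) = J (1, 0)" "T (0, 1) = d *\<^sub>R J (0, 1)"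
    using linear_scale[OF J(1), of d "(0, 1)"] by (simp_all add: T_def)
  then have T_e1: "lp_norm q (T (1, 0)) = 1" and "lp_norm q (T (0, 1)) = \<bar>d\<bar>"
    using J(3,4) assms(1) by (simp_all add: lp_norm_scaleR)
  with \<open>linear T\<close> op_norm_diagonal_contraction[OF assms(2) bound T_e1] show ?thesis
    by (intro that[of T]) simp_all
qed

theorem mainTheorem10:
  fixes q :: ereal
  assumes "1 \<le> q"
  shows "\<not> uniform_sBPBp 2 q"
proof
  assume "uniform_sBPBp 2 q"
  then obtain \<eta> where "\<eta> > 0" and sBPB: "\<And>T x0. linear T \<Longrightarrow> op_norm 2 q T = 1 \<Longrightarrow>
      norm x0 = 1 \<Longrightarrow> lp_norm q (T x0) > 1 - \<eta> \<Longrightarrow>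
      \<exists>x1. norm x1 = 1 \<and> lp_norm q (T x1) = 1 \<and> norm (x1 - x0) < 1"
    unfolding uniform_sBPBp_def lp_norm_two_eq_norm by (meson zero_less_one)
  define d :: real where "d = max (1 / 2) (1 - \<eta> / 2)"
  have d: "\<bar>d\<bar> < 1" "1 - \<eta> < \<bar>d\<bar>"
    using \<open>\<eta> > 0\<close> by (auto simp: d_def)
  obtain T where T: "linear T" "op_norm 2 q T = 1" "lp_norm q (T (0, 1)) = \<bar>d\<bar>"
    "\<And>x. norm x = 1 \<Longrightarrow> lp_norm q (T x) = 1 \<Longrightarrow> snd x = 0"
    using exists_operator_attaining_norm_only_on_first_axis[OF assms d(1)] by blast
  obtain x1 where x1: "norm x1 = 1" "lp_norm q (T x1) = 1" "norm (x1 - (0, 1)) < 1"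
    using sBPB[OF T(1,2), of "(0, 1)"] T(3) d(2) by auto
  then have "snd x1 = 0"
    using T(4) by blast
  then have "x1 - (0, 1) = (fst x1, - 1)"
    by (cases x1) simp
  then have "1 \<le> norm (x1 - (0, 1))"
    using norm_snd_le[of "- 1 :: real" "fst x1"] by simp
  with x1(3) show False
    by linarith
qed

end
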